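(* Let $n\ge4$. The flat twisted braid group $\mathcal{FT}_n$ has the following reduced presentation: it is isomorphic to the group $$G=\langle\, c_1, b_1, v_1,\dots,v_{n-1} \mid R\,\rangle$$ where $R$ consists of the relations $v_iv_{i+1}v_i=v_{i+1}v_iv_{i+1}$ ($1\le i\le n-2$), $v_iv_j=v_jv_i$ ($|i-j|\ge2$), $v_i^2=1$ ($1\le i\le n-1$), $c_1v_j=v_jc_1$ ($j>2$), $c_1^2=1$, $b_1^2=1$, $b_1v_j=v_jb_1$ ($j>1$), $(v_1c_1v_1)(v_2c_1v_2)(v_1c_1v_1)=(v_2c_1v_2)(v_1c_1v_1)(v_2c_1v_2)$, $c_1(v_2v_3v_1v_2c_1v_2v_1v_3v_2)=(v_2v_3v_1v_2c_1v_2v_1v_3v_2)c_1$, $b_1(v_1b_1v_1)=(v_1b_1v_1)b_1$, $c_1(v_2v_1b_1v_1v_2)=(v_2v_1b_1v_1v_2)c_1$, $(v_1b_1v_1)b_1c_1b_1(v_1b_1v_1)=v_1c_1v_1$. The isomorphism $G\to\mathcal{FT}_n$ sends $c_1,b_1,v_1,\dots,v_{n-1}$ to the elements of the same names, and its inverse sends $v_i\mapsto v_i$, $c_1\mapsto c_1$, $b_1\mapsto b_1$, $c_{i+1}\mapsto (v_i\cdots v_2v_1)(v_{i+1}\cdots v_3v_2)c_1(v_2v_3\cdots v_{i+1})(v_1v_2\cdots v_i)$ for $1\le i\le n-2$, and $b_{i+1}\mapsto(v_iv_{i-1}\cdots v_1)b_1(v_1v_2\cdots v_i)$ for $1\le i\le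 n-1$.
   Context: The flat twisted braid group $\mathcal{FT}_n$ (the group of flat twisted braids on $n$ strands: braids with flat crossings, i.e. crossings without over/under information, virtual crossings and bars on strands, under concatenation) is the group with generators $c_1,\dots,c_{n-1}$ (flat crossing of strands $i,i+1$), $v_1,\dots,v_{n-1}$ (virtual crossing) and $b_1,\dots,b_n$ (bar on strand $i$), subject to the relations: virtual relations $v_i^2=1$, $v_iv_j=v_jv_i$ ($|i-j|\ge2$), $v_iv_{i+1}v_i=v_{i+1}v_iv_{i+1}$; twisted relations $b_i^2=1$ ($1\le i\le n$), $b_ib_j=b_jb_i$ ($i\neq j$); mixed relations $b_iv_i=v_ib_{i+1}$ ($1\le i\le n-1$), $b_iv_j=v_jb_i$ ($j>i$ or $j<i-1$); flat relations $c_i^2=1$, $c_ic_{i+1}c_i=c_{i+1}c_ic_{i+1}$ ($1\le i\le n-2$), $c_ic_j=c_jc_i$ ($|i-j|\ge2$); mixed flat relations $c_iv_j=v_jc_i$ ($|i-j|\ge2$), $v_ic_{i+1}v_i=v_{i+1}c_iv_{i+1}$ ($1\le i\le n-2$), $b_ib_{i+1}c_ib_{i+1}b_i=v_ic_iv_i$ ($1\le i\le n-1$), $b_ic_j=c_jb_i$ ($j>i$ or $j<i-1$). *)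

theory Defs
  imports "HOL-Algebra.Group"
begin

text \<open>A word is a list of letters; a letter is a generator with an exponent sign
  (True = +1, False = -1).\<close>
type_synonym 'a word = "('a \<times> bool) list"

definition inv_letter :: "'a \<times> bool \<Rightarrow> 'a \<times> bool" where
  "inv_letter x = (fst x, \<not> snd x)"

definition inv_word :: "'a word \<Rightarrow> 'a word" where
  "inv_word w = rev (map inv_letter w)"

inductive pres_eq :: "('a word \<times> 'a word) set \<Rightarrow> 'a word \<Rightarrow> 'a word \<Rightarrow> bool"
  for R where
  refl: "pres_eq R w w"
| sym: "pres_eq R u w \<Longrightarrow> pres_eq R w u"
| trans: "pres_eq R u w \<Longrightarrow> pres_eq R w z \<Longrightarrow> pres_eq R u z"
| cancel: "pres_eq R (u @ [x, inv_letter x] @ v) (u @ v)"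
| rel: "(l, r) \<in> R \<Longrightarrow> pres_eq R (u @ l @ v) (u @ r @ v)"

definition pres_class :: "('a word \<times> 'a word) set \<Rightarrow> 'a word \<Rightarrow> 'a word set" where
  "pres_class R w = {w'. pres_eq R w w'}"

definition pres_group :: "'a set \<Rightarrow> ('a word \<times> 'a word) set \<Rightarrow> 'a word set monoid" where
  "pres_group S R = \<lparr>carrier = {pres_class R w | w. fst ` set w \<subseteq> S},
     mult = (\<lambda>A B. {w. \<exists>a\<in>A. \<exists>b\<in>B. pres_eq R w (a @ b)}),
     one = pres_class R []\<rparr>"

definition subst_word :: "('a \<Rightarrow> 'b word) \<Rightarrow> 'a word \<Rightarrow> 'b word" where
  "subst_word f w = concat (map (\<lambda>x. if snd x then f (fst x) else inv_word (f (fst x))) w)"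

definition induced_map :: "('b word \<times> 'b word) set \<Rightarrow> ('a \<Rightarrow> 'b word) \<Rightarrow> 'a word set \<Rightarrow> 'b word set" where
  "induced_map R' f A = {w'. \<exists>w\<in>A. pres_eq R' (subst_word f w) w'}"

datatype gen = C nat | V nat | B nat

definition pw :: "gen list \<Rightarrow> gen word" where
  "pw xs = map (\<lambda>x. (x, True)) xs"

definition FT_gens :: "nat \<Rightarrow> gen set" where
  "FT_gens n = {C i | i. 1 \<le> i \<and> i \<le> n - 1} \<union> {V i | i. 1 \<le> i \<and> i \<le> n - 1}
      \<union> {B i | i. 1 \<le> i \<and> i \<le> n}"

definition FT_rels :: "nat \<Rightarrow> (gen word \<times> gen word) set" where
  "FT_rels n =
     \<comment> \<open>virtual relations\<close>
     {(pw [V i, V i], []) | i. 1 \<le> i \<and> i \<le> n - 1}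
   \<union> {(pw [V i, V j], pw [V j, V i]) | i j. 1 \<le> i \<and> i \<le> n - 1 \<and> 1 \<le> j \<and> j \<le> n - 1
        \<and> (i + 2 \<le> j \<or> j + 2 \<le> i)}
   \<union> {(pw [V i, V (i+1), V i], pw [V (i+1), V i, V (i+1)]) | i. 1 \<le> i \<and> i \<le> n - 2}
     \<comment> \<open>twisted relations\<close>
   \<union> {(pw [B i, B i], []) | i. 1 \<le> i \<and> i \<le> n}
   \<union> {(pw [B i, B j], pw [B j, B i]) | i j. 1 \<le> i \<and> i \<le> n \<and> 1 \<le> j \<and> j \<le> n \<and> i \<noteq> j}
     \<comment> \<open>mixed relations\<close>
   \<union> {(pw [B i, V i], pw [V i, B (i+1)]) | i. 1 \<le> i \<and> i \<le> n - 1}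
   \<union> {(pw [B i, V j], pw [V j, B i]) | i j. 1 \<le> i \<and> i \<le> n \<and> 1 \<le> j \<and> j \<le> n - 1
        \<and> (j > i \<or> j + 1 < i)}
     \<comment> \<open>flat relations\<close>
   \<union> {(pw [C i, C i], []) | i. 1 \<le> i \<and> i \<le> n - 1}
   \<union> {(pw [C i, C (i+1), C i], pw [C (i+1), C i, C (i+1)]) | i. 1 \<le> i \<and> i \<le> n - 2}
   \<union> {(pw [C i, C j], pw [C j, C i]) | i j. 1 \<le> i \<and> i \<le> n - 1 \<and> 1 \<le> j \<and> j \<le> n - 1
        \<and> (i + 2 \<le> j \<or> j + 2 \<le> i)}
     \<comment> \<open>mixed flat relations\<close>
   \<union> {(pw [C i, V j], pw [V j, C i]) | i j. 1 \<le> i \<and> i \<le> n - 1 \<and> 1 \<le> j \<and> j \<le> n - 1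
        \<and> (i + 2 \<le> j \<or> j + 2 \<le> i)}
   \<union> {(pw [V i, C (i+1), V i], pw [V (i+1), C i, V (i+1)]) | i. 1 \<le> i \<and> i \<le> n - 2}
   \<union> {(pw [B i, B (i+1), C i, B (i+1), B i], pw [V i, C i, V i]) | i. 1 \<le> i \<and> i \<le> n - 1}
   \<union> {(pw [B i, C j], pw [C j, B i]) | i j. 1 \<le> i \<and> i \<le> n \<and> 1 \<le> j \<and> j \<le> n - 1
        \<and> (j > i \<or> j + 1 < i)}"

definition FT :: "nat \<Rightarrow> gen word set monoid" where
  "FT n = pres_group (FT_gens n) (FT_rels n)"

definition red_gens :: "nat \<Rightarrow> gen set" where
  "red_gens n = {C 1, B 1} \<union> {V i | i. 1 \<le> i \<and> i \<le> n - 1}"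

definition red_rels :: "nat \<Rightarrow> (gen word \<times> gen word) set" where
  "red_rels n =
     {(pw [V i, V (i+1), V i], pw [V (i+1), V i, V (i+1)]) | i. 1 \<le> i \<and> i \<le> n - 2}
   \<union> {(pw [V i, V j], pw [V j, V i]) | i j. 1 \<le> i \<and> i \<le> n - 1 \<and> 1 \<le> j \<and> j \<le> n - 1
        \<and> (i + 2 \<le> j \<or> j + 2 \<le> i)}
   \<union> {(pw [V i, V i], []) | i. 1 \<le> i \<and> i \<le> n - 1}
   \<union> {(pw [C 1, V j], pw [V j, C 1]) | j. 2 < j \<and> j \<le> n - 1}
   \<union> {(pw [C 1, C 1], []), (pw [B 1, B 1], [])}
   \<union> {(pw [B 1, V j], pw [V j, B 1]) | j. 1 < j \<and> j \<le> n - 1}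
   \<union> {(pw [V 1, C 1, V 1, V 2, C 1, V 2, V 1, C 1, V 1],
        pw [V 2, C 1, V 2, V 1, C 1, V 1, V 2, C 1, V 2]),
      (pw [C 1, V 2, V 3, V 1, V 2, C 1, V 2, V 1, V 3, V 2],
        pw [V 2, V 3, V 1, V 2, C 1, V 2, V 1, V 3, V 2, C 1]),
      (pw [B 1, V 1, B 1, V 1], pw [V 1, B 1, V 1, B 1]),
      (pw [C 1, V 2, V 1, B 1, V 1, V 2], pw [V 2, V 1, B 1, V 1, V 2, C 1]),
      (pw [V 1, B 1, V 1, B 1, C 1, B 1, V 1, B 1, V 1], pw [V 1, C 1, V 1])}"

definition Gred :: "nat \<Rightarrow> gen word set monoid" where
  "Gred n = pres_group (red_gens n) (red_rels n)"

definition vdown :: "nat \<Rightarrow> nat \<Rightarrow> gen list" where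
  "vdown i j = map V (rev [j..<i+1])"

definition vup :: "nat \<Rightarrow> nat \<Rightarrow> gen list" where
  "vup j i = map V [j..<i+1]"

definition phi_gen :: "gen \<Rightarrow> gen word" where
  "phi_gen g = pw [g]"

fun psi_gen :: "gen \<Rightarrow> gen word" where
  "psi_gen (V i) = pw [V i]"
| "psi_gen (C k) = (if k \<le> 1 then pw [C k] else
     pw (vdown (k-1) 1 @ vdown k 2 @ [C 1] @ vup 2 k @ vup 1 (k-1)))"
| "psi_gen (B k) = (if k \<le> 1 then pw [B k] else
     pw (vdown (k-1) 1 @ [B 1] @ vup 1 (k-1)))"

end

theory Submission
  imports Defs
begin

(*
  Conjugation by words in the virtual crossings acts on bars and flat crossings by
  permuting strands: writing b_k for the bar on strand k and c_(a,b) for a flat crossing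
  of strands a and b, one has v_j b_k v_j = b_(s_j k) and v_j c_(a,b) v_j = c_(s_j a, s_j b),
  and in the reduced group G this follows from the virtual relations and the
  commutation of b_1, c_1 with far away v_j alone. Hence, once b_k and c_k = c_(k,k+1) are
  expressed through b_1, c_1 and the v_i, every defining relation of FT_n is a conjugate of
  the same relation on the first three or four strands, and these are the extra relations
  of G up to conjugation. Conversely the relations of G hold in FT_n because there
  b_(k+1) = v_k b_k v_k and c_(k+1) = v_k v_(k+1) c_k v_(k+1) v_k. The two substitutions
  are therefore mutually inverse on generators and induce inverse isomorphisms.
*)

section \<open>Presented groups and induced maps\<close>

lemma pres_eq_append_context: "pres_eq R a b \<Longrightarrow> pres_eq R (u @ a @ v) (u @ b @ v)"
proof (induction rule: pres_eq.induct)
  case (refl w) then show ?case by (rule pres_eq.refl)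
next
  case (sym a w) then show ?case by (blast intro: pres_eq.sym)
next
  case (trans a w z) then show ?case by (metis pres_eq.trans)
next
  case (cancel u' x v')
  have "pres_eq R ((u @ u') @ [x, inv_letter x] @ (v' @ v)) ((u @ u') @ (v' @ v))"
    by (rule pres_eq.cancel)
  then show ?case by simp
next
  case (rel l r u' v')
  have "pres_eq R ((u @ u') @ l @ (v' @ v)) ((u @ u') @ r @ (v' @ v))"
    by (rule pres_eq.rel[OF rel])
  then show ?case by simp
qed

lemma pres_eq_append: "pres_eq R a a' \<Longrightarrow> pres_eq R b b' \<Longrightarrow> pres_eq R (a @ b) (a' @ b')"
  using pres_eq_append_context[of R a a' "[]" b] pres_eq_append_context[of R b b' a' "[]"]
  by (auto intro: pres_eq.trans)

lemma pres_eq_relI: "(l, r) \<in> R \<Longrightarrow> pres_eq R l r"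
  using pres_eq.rel[of l r R "[]" "[]"] by simp

lemma inv_letter_inv_letter [simp]: "inv_letter (inv_letter x) = x"
  by (simp add: inv_letter_def)

lemma inv_word_Nil [simp]: "inv_word [] = []"
  by (simp add: inv_word_def)

lemma inv_word_Cons [simp]: "inv_word (x # w) = inv_word w @ [inv_letter x]"
  by (simp add: inv_word_def)

lemma inv_word_append [simp]: "inv_word (a @ b) = inv_word b @ inv_word a"
  by (simp add: inv_word_def)

lemma inv_word_inv_word [simp]: "inv_word (inv_word w) = w"
  by (simp add: inv_word_def rev_map comp_def)

lemma pres_eq_append_inv_word: "pres_eq R (w @ inv_word w) []"
proof (induction w)
  case Nil then show ?case by (simp add: pres_eq.refl)
next
  case (Cons x w)
  have "pres_eq R ([x] @ (w @ inv_word w) @ [inv_letter x]) ([x] @ [] @ [inv_letter x])"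
    by (rule pres_eq_append_context[OF Cons.IH])
  moreover have "pres_eq R ([] @ [x, inv_letter x] @ []) ([] @ [])"
    by (rule pres_eq.cancel)
  ultimately show ?case by (auto intro: pres_eq.trans)
qed

lemma pres_eq_inv_word_append: "pres_eq R (inv_word w @ w) []"
  using pres_eq_append_inv_word[of R "inv_word w"] by simp

lemma pres_eq_inv_word: "pres_eq R a b \<Longrightarrow> pres_eq R (inv_word a) (inv_word b)"
proof -
  assume ab: "pres_eq R a b"
  have "pres_eq R (inv_word a @ []) (inv_word a @ (b @ inv_word b))"
    by (rule pres_eq_append[OF pres_eq.refl pres_eq.sym[OF pres_eq_append_inv_word]])
  moreover have "pres_eq R ((inv_word a @ b) @ inv_word b) ((inv_word a @ a) @ inv_word b)"
    by (rule pres_eq_append[OF pres_eq_append[OF pres_eq.refl pres_eq.sym[OF ab]] pres_eq.refl])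
  moreover have "pres_eq R ((inv_word a @ a) @ inv_word b) ([] @ inv_word b)"
    by (rule pres_eq_append[OF pres_eq_inv_word_append pres_eq.refl])
  ultimately show ?thesis by (auto intro: pres_eq.trans)
qed

lemma subst_word_Nil [simp]: "subst_word f [] = []"
  by (simp add: subst_word_def)

lemma subst_word_Cons:
  "subst_word f (x # w) = (if snd x then f (fst x) else inv_word (f (fst x))) @ subst_word f w"
  by (simp add: subst_word_def)

lemma subst_word_append [simp]: "subst_word f (a @ b) = subst_word f a @ subst_word f b"
  by (simp add: subst_word_def)

lemma subst_word_inv_word: "subst_word f (inv_word w) = inv_word (subst_word f w)"
  by (induction w) (auto simp: subst_word_Cons inv_letter_def)

lemma subst_word_subst_word:
  "subst_word g (subst_word f w) = subst_word (\<lambda>a. subst_word g (f a)) w"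
  by (induction w) (auto simp: subst_word_Cons subst_word_inv_word)

definition respects_rels ::
  "('a word \<times> 'a word) set \<Rightarrow> ('b word \<times> 'b word) set \<Rightarrow> ('a \<Rightarrow> 'b word) \<Rightarrow> bool" where
  "respects_rels R R' f \<longleftrightarrow> (\<forall>(l, r) \<in> R. pres_eq R' (subst_word f l) (subst_word f r))"

lemma pres_eq_subst_word:
  assumes "respects_rels R R' f"
  shows "pres_eq R w w' \<Longrightarrow> pres_eq R' (subst_word f w) (subst_word f w')"
proof (induction rule: pres_eq.induct)
  case (refl w) then show ?case by (rule pres_eq.refl)
next
  case (sym a w) then show ?case by (blast intro: pres_eq.sym)
next
  case (trans a w z) then show ?case by (metis pres_eq.trans)
next
  case (cancel u x v)
  have "pres_eq R' (subst_word f [x, inv_letter x]) []"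
    using pres_eq_append_inv_word[of R' "f (fst x)"] pres_eq_inv_word_append[of R' "f (fst x)"]
    by (cases x) (auto simp: subst_word_Cons inv_letter_def)
  then have "pres_eq R' (subst_word f u @ subst_word f [x, inv_letter x] @ subst_word f v)
      (subst_word f u @ [] @ subst_word f v)"
    by (rule pres_eq_append_context)
  then show ?case by (simp add: subst_word_def)
next
  case (rel l r u v)
  have "pres_eq R' (subst_word f l) (subst_word f r)"
    using assms rel unfolding respects_rels_def by auto
  then have "pres_eq R' (subst_word f u @ subst_word f l @ subst_word f v)
      (subst_word f u @ subst_word f r @ subst_word f v)"
    by (rule pres_eq_append_context)
  then show ?case by simp
qed

lemma pres_eq_subst_word_self:
  assumes "\<forall>a \<in> fst ` set w. pres_eq R (f a) [(a, True)]"
  shows "pres_eq R (subst_word f w) w"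
  using assms
proof (induction w)
  case Nil then show ?case by (simp add: pres_eq.refl)
next
  case (Cons x w)
  obtain a s where x: "x = (a, s)" by (cases x)
  have fa: "pres_eq R (f a) [(a, True)]" using Cons.prems x by auto
  have "pres_eq R (if s then f a else inv_word (f a)) [x]"
    using fa pres_eq_inv_word[OF fa] x by (auto simp: inv_letter_def)
  then have "pres_eq R ((if s then f a else inv_word (f a)) @ subst_word f w) ([x] @ w)"
    using Cons by (intro pres_eq_append) auto
  then show ?case using x by (cases s) (simp_all add: subst_word_Cons)
qed

lemma fst_set_subst_word:
  assumes "\<forall>a \<in> S. fst ` set (f a) \<subseteq> S'" "fst ` set w \<subseteq> S"
  shows "fst ` set (subst_word f w) \<subseteq> S'"
  using assms(2)
proof (induction w)
  case Nil then show ?case by simp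
next
  case (Cons x w)
  have "fst ` set (inv_word (f (fst x))) = fst ` set (f (fst x))"
    by (force simp: inv_word_def inv_letter_def)
  moreover have "fst ` set (f (fst x)) \<subseteq> S'" using Cons.prems assms(1) by auto
  ultimately show ?case using Cons by (auto simp: subst_word_Cons)
qed

lemma pres_class_eqI: "pres_eq R a b \<Longrightarrow> pres_class R a = pres_class R b"
  unfolding pres_class_def by (auto intro: pres_eq.trans pres_eq.sym)

lemma carrier_pres_group: "carrier (pres_group S R) = {pres_class R w | w. fst ` set w \<subseteq> S}"
  by (simp add: pres_group_def)

lemma mult_pres_group_pres_class:
  "pres_class R a \<otimes>\<^bsub>pres_group S R\<^esub> pres_class R b = pres_class R (a @ b)"
  unfolding pres_group_def pres_class_def
  by (auto intro: pres_eq.trans pres_eq.sym pres_eq.refl pres_eq_append)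

lemma induced_map_pres_class:
  assumes "respects_rels R R' f"
  shows "induced_map R' f (pres_class R w) = pres_class R' (subst_word f w)"
  unfolding induced_map_def pres_class_def
  using pres_eq_subst_word[OF assms] by (auto intro: pres_eq.trans pres_eq.refl)

lemma induced_map_hom:
  assumes "respects_rels R R' f" "\<forall>a \<in> S. fst ` set (f a) \<subseteq> S'"
  shows "induced_map R' f \<in> hom (pres_group S R) (pres_group S' R')"
  using fst_set_subst_word[OF assms(2)]
  by (fastforce simp: hom_def carrier_pres_group induced_map_pres_class[OF assms(1)]
      mult_pres_group_pres_class)

lemma induced_map_induced_map:
  assumes "respects_rels R R' f" "respects_rels R' R g"
    and "\<forall>a \<in> S. pres_eq R (subst_word g (f a)) [(a, True)]"
    and "x \<in> carrier (pres_group S R)"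
  shows "induced_map R g (induced_map R' f x) = x"
proof -
  obtain w where x: "x = pres_class R w" and w: "fst ` set w \<subseteq> S"
    using assms(4) by (auto simp: carrier_pres_group)
  have "pres_eq R (subst_word (\<lambda>a. subst_word g (f a)) w) w"
    using assms(3) w by (intro pres_eq_subst_word_self) blast
  then show ?thesis
    by (simp add: x induced_map_pres_class assms(1,2) subst_word_subst_word pres_class_eqI)
qed

lemma group_isomorphisms_induced_map:
  assumes "respects_rels R R' f" "respects_rels R' R g"
    and "\<forall>a \<in> S. fst ` set (f a) \<subseteq> S'" "\<forall>a \<in> S'. fst ` set (g a) \<subseteq> S"
    and "\<forall>a \<in> S. pres_eq R (subst_word g (f a)) [(a, True)]"
    and "\<forall>a \<in> S'. pres_eq R' (subst_word f (g a)) [(a, True)]"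
  shows "group_isomorphisms (pres_group S R) (pres_group S' R') (induced_map R' f) (induced_map R g)"
  unfolding group_isomorphisms_def
  using assms by (simp add: induced_map_hom induced_map_induced_map)

lemma pw_Nil [simp]: "pw [] = []"
  by (simp add: pw_def)

lemma pw_Cons: "pw (x # xs) = (x, True) # pw xs"
  by (simp add: pw_def)

lemma pw_append [simp]: "pw (a @ b) = pw a @ pw b"
  by (simp add: pw_def)

lemma pw_eq_iff [simp]: "pw a = pw b \<longleftrightarrow> a = b"
  unfolding pw_def by (simp add: inj_def map_injective)

lemma fst_set_pw [simp]: "fst ` set (pw xs) = set xs"
  by (force simp: pw_def)

definition weq :: "(gen word \<times> gen word) set \<Rightarrow> gen list \<Rightarrow> gen list \<Rightarrow> bool" where
  "weq R a b \<longleftrightarrow> pres_eq R (pw a) (pw b)"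

lemma weq_refl [simp, intro]: "weq R a a"
  by (simp add: weq_def pres_eq.refl)

lemma weq_sym: "weq R a b \<Longrightarrow> weq R b a"
  by (simp add: weq_def pres_eq.sym)

lemma weq_trans [trans]: "weq R a b \<Longrightarrow> weq R b c \<Longrightarrow> weq R a c"
  unfolding weq_def by (rule pres_eq.trans)

lemma weq_append: "weq R a a' \<Longrightarrow> weq R b b' \<Longrightarrow> weq R (a @ b) (a' @ b')"
  unfolding weq_def by (simp add: pres_eq_append)

lemma weq_append_context: "weq R a b \<Longrightarrow> weq R (u @ a @ v) (u @ b @ v)"
  by (intro weq_append weq_refl)

lemma weq_append_left: "weq R a b \<Longrightarrow> weq R (u @ a) (u @ b)"
  by (intro weq_append weq_refl)

lemma weq_append_right: "weq R a b \<Longrightarrow> weq R (a @ v) (b @ v)"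
  by (intro weq_append weq_refl)

lemma weq_commute_cong: "weq R (x @ y) (y @ x) \<Longrightarrow> weq R x x' \<Longrightarrow> weq R y y' \<Longrightarrow>
    weq R (x' @ y') (y' @ x')"
  by (meson weq_append weq_sym weq_trans)

lemma weq_relI: "(pw a, pw b) \<in> R \<Longrightarrow> weq R a b"
  by (simp add: weq_def pres_eq_relI)

section \<open>Conjugation by virtual crossings\<close>

definition vword :: "nat list \<Rightarrow> gen list" where
  "vword w = map V w"

lemma vword_Nil [simp]: "vword [] = []"
  by (simp add: vword_def)

lemma vword_Cons [simp]: "vword (j # w) = V j # vword w"
  by (simp add: vword_def)

lemma vword_append [simp]: "vword (a @ b) = vword a @ vword b"
  by (simp add: vword_def)

definition vconj :: "nat list \<Rightarrow> gen list \<Rightarrow> gen list" where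
  "vconj w x = vword w @ x @ vword (rev w)"

lemma vconj_Nil [simp]: "vconj [] x = x"
  by (simp add: vconj_def)

lemma vconj_Cons: "vconj (j # w) x = [V j] @ vconj w x @ [V j]"
  by (simp add: vconj_def)

lemma vconj_vconj: "vconj u (vconj w x) = vconj (u @ w) x"
  by (simp add: vconj_def)

lemma set_vconj: "set (vconj w x) = V ` set w \<union> set x"
  by (auto simp: vconj_def vword_def)

text \<open>Conjugation by \<open>vword w\<close> moves strand \<open>k\<close> to position \<open>strand_perm w k\<close>.\<close>

definition adj_swap :: "nat \<Rightarrow> nat \<Rightarrow> nat" where
  "adj_swap j k = (if k = j then j + 1 else if k = j + 1 then j else k)"

fun strand_perm :: "nat list \<Rightarrow> nat \<Rightarrow> nat" where
  "strand_perm [] k = k"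
| "strand_perm (j # w) k = adj_swap j (strand_perm w k)"

lemma adj_swap_adj_swap [simp]: "adj_swap j (adj_swap j k) = k"
  by (simp add: adj_swap_def)

lemma strand_perm_append [simp]: "strand_perm (u @ w) k = strand_perm u (strand_perm w k)"
  by (induction u) auto

lemma strand_perm_rev_strand_perm [simp]: "strand_perm (rev w) (strand_perm w k) = k"
  by (induction w arbitrary: k) auto

lemma strand_perm_strand_perm_rev [simp]: "strand_perm w (strand_perm (rev w) k) = k"
  using strand_perm_rev_strand_perm[of "rev w" k] by simp

lemma strand_perm_rev_eq_iff: "strand_perm (rev w) k = l \<longleftrightarrow> k = strand_perm w l"
  by (metis strand_perm_rev_strand_perm strand_perm_strand_perm_rev)

lemma strand_perm_inj: "strand_perm w k = strand_perm w l \<Longrightarrow> k = l"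
  by (metis strand_perm_rev_strand_perm)

lemma strand_perm_fixed: "\<forall>j \<in> set w. k < j \<Longrightarrow> strand_perm w k = k"
  by (induction w) (auto simp: adj_swap_def)

definition countdown :: "nat \<Rightarrow> nat \<Rightarrow> nat list" where
  "countdown m s = rev [s..<m+1]"

lemma countdown_Suc: "s \<le> m \<Longrightarrow> 1 \<le> m \<Longrightarrow> countdown m s = m # countdown (m - 1) s"
  unfolding countdown_def by (cases m) auto

lemma set_countdown [simp]: "set (countdown m s) = {s..m}"
  unfolding countdown_def by auto

lemma strand_perm_countdown:
  "s \<le> m + 1 \<Longrightarrow> strand_perm (countdown m s) k =
     (if k = s then m + 1 else if s < k \<and> k \<le> m + 1 then k - 1 else k)"
proof (induction m arbitrary: k)
  case 0
  then show ?case by (cases s) (auto simp: countdown_def adj_swap_def)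
next
  case (Suc m)
  show ?case
  proof (cases "s \<le> Suc m")
    case True
    then have "countdown (Suc m) s = Suc m # countdown m s" by (simp add: countdown_Suc)
    then show ?thesis using Suc.IH True by (auto simp: adj_swap_def)
  next
    case False
    then show ?thesis using Suc.prems by (simp add: countdown_def)
  qed
qed

text \<open>\<open>carry s k y\<close> conjugates \<open>y\<close> by \<open>v\<^bsub>k-1\<^esub> \<dots> v\<^bsub>s\<^esub>\<close>, which carries strand \<open>s\<close> to
  position \<open>k\<close>. In \<open>flat a b\<close>, strand 2 is first carried to \<open>lift_past a b\<close>, so that
  carrying strand 1 to \<open>a\<close> afterwards moves it on to \<open>b\<close>.\<close>

definition carry :: "nat \<Rightarrow> nat \<Rightarrow> gen list \<Rightarrow> gen list" where
  "carry s k y = vconj (countdown (k - 1) s) y"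

definition lift_past :: "nat \<Rightarrow> nat \<Rightarrow> nat" where
  "lift_past a b = (if b < a then b + 1 else b)"

definition flat :: "nat \<Rightarrow> nat \<Rightarrow> gen list" where
  "flat a b = carry 1 a (carry 2 (lift_past a b) [C 1])"

definition bar :: "nat \<Rightarrow> gen list" where
  "bar k = carry 1 k [B 1]"

definition carry_word :: "nat \<Rightarrow> nat \<Rightarrow> nat \<Rightarrow> nat list" where
  "carry_word s a b = countdown (a - 1) s @ countdown (lift_past a b - 1) (s + 1)"

lemma carry_Suc: "s \<le> k \<Longrightarrow> 1 \<le> s \<Longrightarrow> [V k] @ carry s k y @ [V k] = carry s (k + 1) y"
  by (simp add: carry_def countdown_Suc vconj_Cons)

lemma bar_1: "bar 1 = [B 1]"
  by (simp add: bar_def carry_def countdown_def)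

lemma bar_2: "bar 2 = [V 1, B 1, V 1]"
  by (simp add: bar_def carry_def countdown_def vconj_def)

lemma bar_3: "bar 3 = [V 2, V 1, B 1, V 1, V 2]"
  by (simp add: bar_def carry_def countdown_def vconj_def numeral_3_eq_3 numeral_2_eq_2)

lemma bar_eq_vconj: "bar k = vconj (countdown (k - 1) 1) [B 1]"
  by (simp add: bar_def carry_def)

lemma flat_1_2: "flat 1 2 = [C 1]"
  by (simp add: flat_def carry_def countdown_def lift_past_def)

lemma flat_eq_vconj: "flat a b = vconj (carry_word 1 a b) [C 1]"
  by (simp add: flat_def carry_def carry_word_def vconj_vconj numeral_2_eq_2)

lemma strand_perm_carry_word:
  assumes "1 \<le> s" "s \<le> a" "s \<le> b" "a \<noteq> b"
  shows "strand_perm (carry_word s a b) s = a" "strand_perm (carry_word s a b) (s + 1) = b"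
    and "k < s \<Longrightarrow> strand_perm (carry_word s a b) k = k"
  using assms by (auto simp: carry_word_def strand_perm_countdown lift_past_def)

locale virtual_rels =
  fixes R :: "(gen word \<times> gen word) set" and n :: nat
  assumes V_square: "1 \<le> i \<Longrightarrow> i \<le> n - 1 \<Longrightarrow> weq R [V i, V i] []"
    and V_far_comm: "1 \<le> i \<Longrightarrow> j \<le> n - 1 \<Longrightarrow> i + 2 \<le> j \<Longrightarrow> weq R [V i, V j] [V j, V i]"
    and V_braid: "1 \<le> i \<Longrightarrow> i + 1 \<le> n - 1 \<Longrightarrow>
      weq R [V i, V (i + 1), V i] [V (i + 1), V i, V (i + 1)]"
    and C1_V_comm: "3 \<le> j \<Longrightarrow> j \<le> n - 1 \<Longrightarrow> weq R [C 1, V j] [V j, C 1]"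
    and B1_V_comm: "2 \<le> j \<Longrightarrow> j \<le> n - 1 \<Longrightarrow> weq R [B 1, V j] [V j, B 1]"
begin

abbreviation weq_R (infix "\<simeq>" 50) where "a \<simeq> b \<equiv> weq R a b"

definition valid :: "nat list \<Rightarrow> bool" where
  "valid w \<longleftrightarrow> (\<forall>j \<in> set w. 1 \<le> j \<and> j \<le> n - 1)"

lemma valid_simps [simp]:
  "valid []" "valid (j # w) \<longleftrightarrow> 1 \<le> j \<and> j \<le> n - 1 \<and> valid w"
  "valid (u @ w) \<longleftrightarrow> valid u \<and> valid w" "valid (rev w) \<longleftrightarrow> valid w"
  by (auto simp: valid_def)

lemma valid_countdown: "1 \<le> s \<Longrightarrow> m \<le> n - 1 \<Longrightarrow> valid (countdown m s)"
  by (auto simp: valid_def)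

lemma valid_carry_word: "1 \<le> s \<Longrightarrow> a \<le> n \<Longrightarrow> b \<le> n \<Longrightarrow> valid (carry_word s a b)"
  by (auto simp: valid_def carry_word_def lift_past_def)

lemma strand_perm_range:
  "valid w \<Longrightarrow> 1 \<le> k \<Longrightarrow> k \<le> n \<Longrightarrow> 1 \<le> strand_perm w k \<and> strand_perm w k \<le> n"
  by (induction w) (auto simp: adj_swap_def)

lemma vword_cancel: "valid w \<Longrightarrow> vword w @ vword (rev w) \<simeq> []"
proof (induction w)
  case Nil then show ?case by simp
next
  case (Cons j w)
  have "vword (j # w) @ vword (rev (j # w)) = [V j] @ (vword w @ vword (rev w)) @ [V j]"
    by simp
  also have "\<dots> \<simeq> [V j] @ [] @ [V j]" using Cons by (intro weq_append_context) auto
  also have "\<dots> \<simeq> []" using Cons.prems V_square by simp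
  finally show ?case .
qed

lemma vword_rev_cancel: "valid w \<Longrightarrow> vword (rev w) @ vword w \<simeq> []"
  using vword_cancel[of "rev w"] by simp

lemma vconj_cong: "x \<simeq> y \<Longrightarrow> vconj w x \<simeq> vconj w y"
  unfolding vconj_def by (rule weq_append_context)

lemma vconj_append: "valid w \<Longrightarrow> vconj w (x @ y) \<simeq> vconj w x @ vconj w y"
proof -
  assume w: "valid w"
  have "vconj w x @ vconj w y = vword w @ x @ (vword (rev w) @ vword w) @ y @ vword (rev w)"
    by (simp add: vconj_def)
  also have "\<dots> \<simeq> vword w @ x @ [] @ y @ vword (rev w)"
    by (intro weq_append_context[where u = "vword w @ x", simplified] vword_rev_cancel w)
  finally show ?thesis by (simp add: vconj_def weq_sym)
qed

lemma vconj_append3: "valid w \<Longrightarrow> vconj w (x @ y @ z) \<simeq> vconj w x @ vconj w y @ vconj w z"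
  by (meson vconj_append weq_append weq_refl weq_trans)

lemma vconj_Nil_word: "valid w \<Longrightarrow> vconj w [] \<simeq> []"
  unfolding vconj_def using vword_cancel by simp

lemma vword_rev_cong:
  assumes "valid a" "valid b" "vword a \<simeq> vword b"
  shows "vword (rev a) \<simeq> vword (rev b)"
proof -
  have "vword (rev a) \<simeq> vword (rev a) @ (vword b @ vword (rev b))"
    using weq_append_left[OF vword_cancel[OF assms(2)], of "vword (rev a)"] by (simp add: weq_sym)
  also have "\<dots> \<simeq> vword (rev a) @ (vword a @ vword (rev b))"
    by (intro weq_append_left weq_append_right weq_sym[OF assms(3)])
  also have "\<dots> = (vword (rev a) @ vword a) @ vword (rev b)" by simp
  also have "\<dots> \<simeq> [] @ vword (rev b)" by (intro weq_append_right vword_rev_cancel assms(1))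
  finally show ?thesis by simp
qed

lemma V_conj_imp_comm:
  "1 \<le> j \<Longrightarrow> j \<le> n - 1 \<Longrightarrow> [V j] @ x @ [V j] \<simeq> y \<Longrightarrow> x @ [V j] \<simeq> [V j] @ y"
proof -
  assume j: "1 \<le> j" "j \<le> n - 1" and conj: "[V j] @ x @ [V j] \<simeq> y"
  have "x @ [V j] \<simeq> [V j, V j] @ x @ [V j]"
    using weq_append_right[OF V_square[OF j], of "x @ [V j]"] by (simp add: weq_sym)
  also have "\<dots> = [V j] @ ([V j] @ x @ [V j])" by simp
  also have "\<dots> \<simeq> [V j] @ y" by (rule weq_append_left[OF conj])
  finally show ?thesis .
qed

lemma V_comm_imp_conj:
  "1 \<le> j \<Longrightarrow> j \<le> n - 1 \<Longrightarrow> x @ [V j] \<simeq> [V j] @ x \<Longrightarrow> [V j] @ x @ [V j] \<simeq> x"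
proof -
  assume j: "1 \<le> j" "j \<le> n - 1" and comm: "x @ [V j] \<simeq> [V j] @ x"
  have "[V j] @ x @ [V j] \<simeq> [V j] @ [V j] @ x" by (rule weq_append_left[OF comm])
  also have "\<dots> = [V j, V j] @ x" by simp
  also have "\<dots> \<simeq> [] @ x" by (rule weq_append_right[OF V_square[OF j]])
  finally show ?thesis by simp
qed

lemma V_vword_far_comm:
  assumes "valid [j]" "valid w" "\<forall>i \<in> set w. i + 2 \<le> j \<or> j + 2 \<le> i"
  shows "[V j] @ vword w \<simeq> vword w @ [V j]"
  using assms(2,3)
proof (induction w)
  case Nil then show ?case by simp
next
  case (Cons i w)
  have "[V j, V i] \<simeq> [V i, V j]"
    using assms(1) Cons.prems V_far_comm[of j i] V_far_comm[of i j] by (auto intro: weq_sym)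
  then have "[V j, V i] @ vword w \<simeq> [V i, V j] @ vword w" by (rule weq_append_right)
  then have "[V j] @ vword (i # w) \<simeq> [V i, V j] @ vword w" by simp
  also have "\<dots> = [V i] @ ([V j] @ vword w)" by simp
  also have "\<dots> \<simeq> [V i] @ (vword w @ [V j])" using Cons by (intro weq_append_left) auto
  finally show ?case by simp
qed

lemma V_countdown_shift:
  "1 \<le> s \<Longrightarrow> s \<le> j \<Longrightarrow> j < m \<Longrightarrow> m \<le> n - 1 \<Longrightarrow>
    [V j] @ vword (countdown m s) \<simeq> vword (countdown m s) @ [V (j + 1)]"
proof (induction m)
  case 0 then show ?case by simp
next
  case (Suc m)
  have ds: "countdown (Suc m) s = Suc m # countdown m s" using Suc.prems countdown_Suc by simp
  show ?case
  proof (cases "j < m")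
    case True
    have "[V j, V (Suc m)] \<simeq> [V (Suc m), V j]" using Suc.prems True V_far_comm by auto
    then have "[V j, V (Suc m)] @ vword (countdown m s) \<simeq> [V (Suc m), V j] @ vword (countdown m s)"
      by (rule weq_append_right)
    then have "[V j] @ vword (countdown (Suc m) s) \<simeq> [V (Suc m), V j] @ vword (countdown m s)"
      using ds by simp
    also have "\<dots> = [V (Suc m)] @ ([V j] @ vword (countdown m s))" by simp
    also have "\<dots> \<simeq> [V (Suc m)] @ (vword (countdown m s) @ [V (j + 1)])"
      using Suc True by (intro weq_append_left) auto
    finally show ?thesis using ds by simp
  next
    case False
    then have jm: "j = m" using Suc.prems by simp
    have d2: "countdown m s = j # countdown (j - 1) s" using countdown_Suc Suc.prems jm by simp
    have "[V j] @ vword (countdown (Suc m) s) = [V j, V (j + 1), V j] @ vword (countdown (j - 1) s)"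
      using ds d2 jm by simp
    also have "\<dots> \<simeq> [V (j + 1), V j, V (j + 1)] @ vword (countdown (j - 1) s)"
      using Suc.prems jm by (intro weq_append_right V_braid) auto
    also have "\<dots> = [V (j + 1), V j] @ ([V (j + 1)] @ vword (countdown (j - 1) s))" by simp
    also have "\<dots> \<simeq> [V (j + 1), V j] @ (vword (countdown (j - 1) s) @ [V (j + 1)])"
      using Suc.prems jm by (intro weq_append_left V_vword_far_comm) (auto simp: valid_def)
    finally show ?thesis using ds d2 jm by simp
  qed
qed

lemma V_conj_carry_Suc:
  "1 \<le> s \<Longrightarrow> s \<le> j \<Longrightarrow> j \<le> n - 1 \<Longrightarrow> [V j] @ carry s (j + 1) y @ [V j] \<simeq> carry s j y"
proof -
  assume a: "1 \<le> s" "s \<le> j" "j \<le> n - 1"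
  have "[V j] @ carry s (j + 1) y @ [V j] = [V j, V j] @ carry s j y @ [V j, V j]"
    using carry_Suc[OF a(2,1), of y, symmetric] by simp
  also have "\<dots> \<simeq> [] @ carry s j y @ []"
    using a V_square[of j] by (intro weq_append weq_refl) auto
  finally show ?thesis by simp
qed

lemma V_countdown_shift_rev:
  "1 \<le> s \<Longrightarrow> s \<le> j \<Longrightarrow> j < m \<Longrightarrow> m \<le> n - 1 \<Longrightarrow>
    vword (rev (countdown m s)) @ [V j] \<simeq> [V (j + 1)] @ vword (rev (countdown m s))"
  using vword_rev_cong[of "j # countdown m s" "countdown m s @ [j + 1]"] V_countdown_shift[of s j m]
  by (simp add: valid_def)

lemma V_conj_carry_past:
  "1 \<le> s \<Longrightarrow> s \<le> j \<Longrightarrow> j + 1 < k \<Longrightarrow> k \<le> n \<Longrightarrow>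
    [V j] @ carry s k y @ [V j] \<simeq> carry s k ([V (j + 1)] @ y @ [V (j + 1)])"
proof -
  assume a: "1 \<le> s" "s \<le> j" "j + 1 < k" "k \<le> n"
  let ?D = "countdown (k - 1) s"
  have "[V j] @ carry s k y @ [V j] = ([V j] @ vword ?D) @ y @ (vword (rev ?D) @ [V j])"
    by (simp add: carry_def vconj_def)
  also have "\<dots> \<simeq> (vword ?D @ [V (j + 1)]) @ y @ ([V (j + 1)] @ vword (rev ?D))"
    using a by (intro weq_append weq_refl V_countdown_shift V_countdown_shift_rev) auto
  finally show ?thesis by (simp add: carry_def vconj_def)
qed

lemma V_conj_carry_far:
  "1 \<le> s \<Longrightarrow> k < j \<Longrightarrow> j \<le> n - 1 \<Longrightarrow>
    [V j] @ carry s k y @ [V j] \<simeq> carry s k ([V j] @ y @ [V j])"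
proof -
  assume a: "1 \<le> s" "k < j" "j \<le> n - 1"
  let ?D = "countdown (k - 1) s"
  have vD: "valid ?D" using a by (intro valid_countdown) auto
  have far: "\<forall>i \<in> set ?D. i + 2 \<le> j \<or> j + 2 \<le> i" using a by auto
  have "[V j] @ carry s k y @ [V j] = ([V j] @ vword ?D) @ y @ (vword (rev ?D) @ [V j])"
    by (simp add: carry_def vconj_def)
  also have "\<dots> \<simeq> (vword ?D @ [V j]) @ y @ ([V j] @ vword (rev ?D))"
    using a vD far by (intro weq_append weq_refl V_vword_far_comm weq_sym[OF V_vword_far_comm]) auto
  finally show ?thesis by (simp add: carry_def vconj_def)
qed


lemma V_conj_carry:
  assumes "1 \<le> s" "s \<le> k" "k \<le> n" "s \<le> j" "j \<le> n - 1"
    and y_inv: "\<And>i. s < i \<Longrightarrow> i \<le> n - 1 \<Longrightarrow> [V i] @ y @ [V i] \<simeq> y"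
  shows "[V j] @ carry s k y @ [V j] \<simeq> carry s (adj_swap j k) y"
proof -
  consider "k = j" | "k = j + 1" | "j + 1 < k" | "k < j" by linarith
  then show ?thesis
  proof cases
    case 1
    then show ?thesis using assms carry_Suc[of s k y] by (simp add: adj_swap_def)
  next
    case 2
    then show ?thesis using assms V_conj_carry_Suc[of s j y] by (simp add: adj_swap_def)
  next
    case 3
    have "[V j] @ carry s k y @ [V j] \<simeq> carry s k ([V (j + 1)] @ y @ [V (j + 1)])"
      using assms 3 by (intro V_conj_carry_past) auto
    also have "\<dots> \<simeq> carry s k y"
      unfolding carry_def using assms 3 by (intro vconj_cong y_inv) auto
    finally show ?thesis using 3 by (simp add: adj_swap_def)
  next
    case 4
    have "[V j] @ carry s k y @ [V j] \<simeq> carry s k ([V j] @ y @ [V j])"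
      using assms 4 by (intro V_conj_carry_far) auto
    also have "\<dots> \<simeq> carry s k y"
      unfolding carry_def using assms 4 by (intro vconj_cong y_inv) auto
    finally show ?thesis using 4 by (simp add: adj_swap_def)
  qed
qed

lemma V_conj_bar:
  "1 \<le> k \<Longrightarrow> k \<le> n \<Longrightarrow> 1 \<le> j \<Longrightarrow> j \<le> n - 1 \<Longrightarrow> [V j] @ bar k @ [V j] \<simeq> bar (adj_swap j k)"
  unfolding bar_def using B1_V_comm by (intro V_conj_carry V_comm_imp_conj) auto

lemma V_conj_carry_2_C1:
  "2 \<le> k \<Longrightarrow> k \<le> n \<Longrightarrow> 2 \<le> j \<Longrightarrow> j \<le> n - 1 \<Longrightarrow>
    [V j] @ carry 2 k [C 1] @ [V j] \<simeq> carry 2 (adj_swap j k) [C 1]"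
  using C1_V_comm by (intro V_conj_carry V_comm_imp_conj) auto

lemma V_conj_flat:
  assumes ab: "1 \<le> a" "a \<le> n" "1 \<le> b" "b \<le> n" "a \<noteq> b" and j: "1 \<le> j" "j \<le> n - 1"
  shows "[V j] @ flat a b @ [V j] \<simeq> flat (adj_swap j a) (adj_swap j b)"
proof -
  let ?y = "carry 2 (lift_past a b) [C 1]"
  have lift: "2 \<le> lift_past a b" "lift_past a b \<le> n" using ab by (auto simp: lift_past_def)
  consider "a = j" | "a = j + 1" | "j + 1 < a" | "a < j" by linarith
  then show ?thesis
  proof cases
    case 1
    then have "lift_past (j + 1) (adj_swap j b) = lift_past a b"
      using ab by (auto simp: lift_past_def adj_swap_def)
    then show ?thesis using 1 ab carry_Suc[of 1 a ?y] by (simp add: flat_def adj_swap_def)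
  next
    case 2
    then have "lift_past j (adj_swap j b) = lift_past a b"
      using ab by (auto simp: lift_past_def adj_swap_def)
    then show ?thesis using 2 ab j V_conj_carry_Suc[of 1 j ?y] by (simp add: flat_def adj_swap_def)
  next
    case 3
    have "[V j] @ flat a b @ [V j] \<simeq> carry 1 a ([V (j + 1)] @ ?y @ [V (j + 1)])"
      unfolding flat_def using 3 ab j by (intro V_conj_carry_past) auto
    also have "\<dots> \<simeq> carry 1 a (carry 2 (adj_swap (j + 1) (lift_past a b)) [C 1])"
      unfolding carry_def[of 1] using 3 ab j lift by (intro vconj_cong V_conj_carry_2_C1) auto
    also have "adj_swap (j + 1) (lift_past a b) = lift_past a (adj_swap j b)"
      using 3 ab by (auto simp: lift_past_def adj_swap_def)
    finally show ?thesis using 3 by (simp add: flat_def adj_swap_def)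
  next
    case 4
    have "[V j] @ flat a b @ [V j] \<simeq> carry 1 a ([V j] @ ?y @ [V j])"
      unfolding flat_def using 4 ab j by (intro V_conj_carry_far) auto
    also have "\<dots> \<simeq> carry 1 a (carry 2 (adj_swap j (lift_past a b)) [C 1])"
      unfolding carry_def[of 1] using 4 ab j lift by (intro vconj_cong V_conj_carry_2_C1) auto
    also have "adj_swap j (lift_past a b) = lift_past a (adj_swap j b)"
      using 4 ab by (auto simp: lift_past_def adj_swap_def)
    finally show ?thesis using 4 by (simp add: flat_def adj_swap_def)
  qed
qed

lemma vconj_bar: "valid w \<Longrightarrow> 1 \<le> k \<Longrightarrow> k \<le> n \<Longrightarrow> vconj w (bar k) \<simeq> bar (strand_perm w k)"
proof (induction w)
  case Nil then show ?case by simp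
next
  case (Cons j w)
  have "vconj (j # w) (bar k) = [V j] @ vconj w (bar k) @ [V j]" by (simp add: vconj_Cons)
  also have "\<dots> \<simeq> [V j] @ bar (strand_perm w k) @ [V j]"
    using Cons by (intro weq_append_context) auto
  also have "\<dots> \<simeq> bar (strand_perm (j # w) k)"
    using Cons.prems strand_perm_range[of w k] V_conj_bar[of "strand_perm w k" j] by simp
  finally show ?case .
qed

lemma vconj_flat:
  "valid w \<Longrightarrow> 1 \<le> a \<Longrightarrow> a \<le> n \<Longrightarrow> 1 \<le> b \<Longrightarrow> b \<le> n \<Longrightarrow> a \<noteq> b \<Longrightarrow>
    vconj w (flat a b) \<simeq> flat (strand_perm w a) (strand_perm w b)"
proof (induction w)
  case Nil then show ?case by simp
next
  case (Cons j w)
  have "vconj (j # w) (flat a b) = [V j] @ vconj w (flat a b) @ [V j]" by (simp add: vconj_Cons)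
  also have "\<dots> \<simeq> [V j] @ flat (strand_perm w a) (strand_perm w b) @ [V j]"
    using Cons by (intro weq_append_context) auto
  also have "\<dots> \<simeq> flat (strand_perm (j # w) a) (strand_perm (j # w) b)"
    using Cons.prems strand_perm_range[of w a] strand_perm_range[of w b]
      strand_perm_inj[of w a b] V_conj_flat[of "strand_perm w a" "strand_perm w b" j]
    by auto
  finally show ?case .
qed

lemma vconj_B1: "valid w \<Longrightarrow> 1 \<le> n \<Longrightarrow> vconj w [B 1] \<simeq> bar (strand_perm w 1)"
  using vconj_bar[of w 1] unfolding bar_1 by simp

lemma vconj_C1: "valid w \<Longrightarrow> 2 \<le> n \<Longrightarrow> vconj w [C 1] \<simeq> flat (strand_perm w 1) (strand_perm w 2)"
  using vconj_flat[of w 1 2] unfolding flat_1_2 by simp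

lemma commute_vconj:
  assumes "valid w" "x @ y \<simeq> y @ x" "vconj w x \<simeq> x'" "vconj w y \<simeq> y'"
  shows "x' @ y' \<simeq> y' @ x'"
proof -
  have "x' @ y' \<simeq> vconj w x @ vconj w y"
    using weq_append[OF weq_sym[OF assms(3)] weq_sym[OF assms(4)]] .
  also have "\<dots> \<simeq> vconj w (x @ y)" using weq_sym[OF vconj_append[OF assms(1)]] .
  also have "\<dots> \<simeq> vconj w (y @ x)" using assms by (intro vconj_cong)
  also have "\<dots> \<simeq> vconj w y @ vconj w x" using assms by (intro vconj_append)
  also have "\<dots> \<simeq> y' @ x'" using assms by (intro weq_append)
  finally show ?thesis .
qed

lemma braid_vconj:
  assumes "valid w" "x @ y @ x \<simeq> y @ x @ y" "vconj w x \<simeq> x'" "vconj w y \<simeq> y'"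
  shows "x' @ y' @ x' \<simeq> y' @ x' @ y'"
proof -
  have "x' @ y' @ x' \<simeq> vconj w x @ vconj w y @ vconj w x"
    using weq_sym[OF assms(3)] weq_sym[OF assms(4)] by (intro weq_append)
  also have "\<dots> \<simeq> vconj w (x @ y @ x)" using weq_sym[OF vconj_append3[OF assms(1)]] .
  also have "\<dots> \<simeq> vconj w (y @ x @ y)" using assms by (intro vconj_cong)
  also have "\<dots> \<simeq> vconj w y @ vconj w x @ vconj w y" using assms by (intro vconj_append3)
  also have "\<dots> \<simeq> y' @ x' @ y'" using assms by (intro weq_append)
  finally show ?thesis .
qed

lemma square_vconj: "valid w \<Longrightarrow> x @ x \<simeq> [] \<Longrightarrow> vconj w x @ vconj w x \<simeq> []"
proof -
  assume w: "valid w" and sq: "x @ x \<simeq> []"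
  have "vconj w x @ vconj w x \<simeq> vconj w (x @ x)" by (rule weq_sym[OF vconj_append[OF w]])
  also have "\<dots> \<simeq> vconj w []" by (rule vconj_cong[OF sq])
  also have "\<dots> \<simeq> []" by (rule vconj_Nil_word[OF w])
  finally show ?thesis .
qed

lemma bar_V_comm:
  "1 \<le> k \<Longrightarrow> k \<le> n \<Longrightarrow> 1 \<le> j \<Longrightarrow> j \<le> n - 1 \<Longrightarrow> bar k @ [V j] \<simeq> [V j] @ bar (adj_swap j k)"
  by (intro V_conj_imp_comm V_conj_bar)

lemma flat_V_comm:
  "1 \<le> a \<Longrightarrow> a \<le> n \<Longrightarrow> 1 \<le> b \<Longrightarrow> b \<le> n \<Longrightarrow> a \<noteq> b \<Longrightarrow> 1 \<le> j \<Longrightarrow> j \<le> n - 1 \<Longrightarrow>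
    flat a b @ [V j] \<simeq> [V j] @ flat (adj_swap j a) (adj_swap j b)"
  by (intro V_conj_imp_comm V_conj_flat)

lemma V_flat_V:
  assumes "1 \<le> i" "i + 2 \<le> n"
  shows "[V i] @ flat (i + 1) (i + 2) @ [V i] \<simeq> [V (i + 1)] @ flat i (i + 1) @ [V (i + 1)]"
proof -
  have "[V i] @ flat (i + 1) (i + 2) @ [V i] \<simeq> flat i (i + 2)"
    using assms V_conj_flat[of "i + 1" "i + 2" i] by (simp add: adj_swap_def)
  also have "flat i (i + 2) \<simeq> [V (i + 1)] @ flat i (i + 1) @ [V (i + 1)]"
    using assms V_conj_flat[of i "i + 1" "i + 1"] by (simp add: adj_swap_def weq_sym)
  finally show ?thesis .
qed

end

section \<open>The relations of the reduced presentation\<close>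

locale reduced_rels = virtual_rels +
  assumes n_ge_4: "4 \<le> n"
    and C1_square: "weq R [C 1, C 1] []"
    and B1_square: "weq R [B 1, B 1] []"
    and C1_braid_rel: "weq R [V 1, C 1, V 1, V 2, C 1, V 2, V 1, C 1, V 1]
      [V 2, C 1, V 2, V 1, C 1, V 1, V 2, C 1, V 2]"
    and C1_flat_comm_rel: "weq R [C 1, V 2, V 3, V 1, V 2, C 1, V 2, V 1, V 3, V 2]
      [V 2, V 3, V 1, V 2, C 1, V 2, V 1, V 3, V 2, C 1]"
    and B1_bar_comm_rel: "weq R [B 1, V 1, B 1, V 1] [V 1, B 1, V 1, B 1]"
    and C1_bar_comm_rel: "weq R [C 1, V 2, V 1, B 1, V 1, V 2] [V 2, V 1, B 1, V 1, V 2, C 1]"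
    and bar_flat_bar_rel: "weq R [V 1, B 1, V 1, B 1, C 1, B 1, V 1, B 1, V 1] [V 1, C 1, V 1]"
begin

lemma bar_square: "1 \<le> k \<Longrightarrow> k \<le> n \<Longrightarrow> bar k @ bar k \<simeq> []"
  unfolding bar_eq_vconj using B1_square by (intro square_vconj valid_countdown) auto

lemma flat_square: "1 \<le> k \<Longrightarrow> k + 1 \<le> n \<Longrightarrow> flat k (k + 1) @ flat k (k + 1) \<simeq> []"
  unfolding flat_eq_vconj using C1_square by (intro square_vconj valid_carry_word) auto

lemma B1_bar_comm: "2 \<le> a \<Longrightarrow> a \<le> n \<Longrightarrow> [B 1] @ bar a \<simeq> bar a @ [B 1]"
proof -
  assume a: "2 \<le> a" "a \<le> n"
  let ?w = "countdown (a - 1) 2"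
  have w: "valid ?w" using a by (intro valid_countdown) auto
  have "vconj ?w [B 1] \<simeq> bar 1"
    using vconj_B1[OF w] strand_perm_fixed[of ?w 1] a by simp
  then have B1: "vconj ?w [B 1] \<simeq> [B 1]" by (simp only: bar_1)
  have bar2: "vconj ?w (bar 2) \<simeq> bar a"
    using vconj_bar[OF w, of 2] a by (simp add: strand_perm_countdown)
  have "[B 1] @ bar 2 \<simeq> bar 2 @ [B 1]" using B1_bar_comm_rel by (simp add: bar_2)
  then show ?thesis by (rule commute_vconj[OF w _ B1 bar2])
qed

lemma bar_comm:
  assumes "1 \<le> i" "i \<le> n" "1 \<le> j" "j \<le> n" "i \<noteq> j"
  shows "bar i @ bar j \<simeq> bar j @ bar i"
proof -
  let ?w = "countdown (i - 1) 1"
  let ?a = "strand_perm (rev ?w) j"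
  have w: "valid ?w" using assms by (intro valid_countdown) auto
  have w1: "strand_perm ?w 1 = i" using assms by (simp add: strand_perm_countdown)
  have a: "1 \<le> ?a" "?a \<le> n" using strand_perm_range[of "rev ?w" j] w assms by simp_all
  have a1: "?a \<noteq> 1" using w1 assms by (simp add: strand_perm_rev_eq_iff)
  have Bi: "vconj ?w [B 1] \<simeq> bar i" by (simp add: bar_eq_vconj)
  have bar_a: "vconj ?w (bar ?a) \<simeq> bar j" using vconj_bar[OF w a] by simp
  show ?thesis using a a1 by (intro commute_vconj[OF w B1_bar_comm Bi bar_a]) auto
qed

lemma C1_bar_comm: "3 \<le> a \<Longrightarrow> a \<le> n \<Longrightarrow> [C 1] @ bar a \<simeq> bar a @ [C 1]"
proof -
  assume a: "3 \<le> a" "a \<le> n"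
  let ?w = "countdown (a - 1) 3"
  have w: "valid ?w" using a by (intro valid_countdown) auto
  have "vconj ?w [C 1] \<simeq> flat 1 2"
    using vconj_C1[OF w] strand_perm_fixed[of ?w 1] strand_perm_fixed[of ?w 2] a by simp
  then have C1: "vconj ?w [C 1] \<simeq> [C 1]" by (simp only: flat_1_2)
  have bar3: "vconj ?w (bar 3) \<simeq> bar a"
    using vconj_bar[OF w, of 3] a by (simp add: strand_perm_countdown)
  have "[C 1] @ bar 3 \<simeq> bar 3 @ [C 1]" using C1_bar_comm_rel by (simp add: bar_3)
  then show ?thesis by (rule commute_vconj[OF w _ C1 bar3])
qed

lemma bar_flat_comm:
  assumes "1 \<le> i" "i \<le> n" "1 \<le> j" "j + 1 \<le> n" "i \<noteq> j" "i \<noteq> j + 1"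
  shows "bar i @ flat j (j + 1) \<simeq> flat j (j + 1) @ bar i"
proof -
  let ?w = "carry_word 1 j (j + 1)"
  let ?a = "strand_perm (rev ?w) i"
  have w: "valid ?w" using assms by (intro valid_carry_word) auto
  have w12: "strand_perm ?w 1 = j" "strand_perm ?w 2 = j + 1"
    using strand_perm_carry_word[of 1 j "j + 1", unfolded one_add_one] assms by simp_all
  have a: "1 \<le> ?a" "?a \<le> n" using strand_perm_range[of "rev ?w" i] w assms by simp_all
  have a12: "?a \<noteq> 1" "?a \<noteq> 2" using w12 assms by (simp_all add: strand_perm_rev_eq_iff)
  have C1: "vconj ?w [C 1] \<simeq> flat j (j + 1)" by (simp add: flat_eq_vconj)
  have bar_a: "vconj ?w (bar ?a) \<simeq> bar i" using vconj_bar[OF w a] by simp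
  show ?thesis
    using a a12 by (intro commute_vconj[OF w weq_sym[OF C1_bar_comm] bar_a C1]) auto
qed

lemma C1_flat_3_4_comm: "[C 1] @ flat 3 4 \<simeq> flat 3 4 @ [C 1]"
proof -
  let ?w = "[2, 3, 1, 2] :: nat list"
  have w: "valid ?w" using n_ge_4 by auto
  have perm: "strand_perm ?w 1 = 3" "strand_perm ?w 2 = 4" by (simp_all add: adj_swap_def)
  have flat_3_4: "vconj ?w [C 1] \<simeq> flat 3 4"
    using vconj_C1[OF w] n_ge_4 unfolding perm by simp
  have "[C 1] @ flat 3 4 \<simeq> [C 1] @ vconj ?w [C 1]"
    by (rule weq_append_left[OF weq_sym[OF flat_3_4]])
  also have "\<dots> \<simeq> vconj ?w [C 1] @ [C 1]"
    using C1_flat_comm_rel by (simp add: vconj_def)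
  also have "\<dots> \<simeq> flat 3 4 @ [C 1]"
    by (rule weq_append_right[OF flat_3_4])
  finally show ?thesis .
qed

lemma C1_flat_comm:
  assumes "3 \<le> a" "a \<le> n" "3 \<le> b" "b \<le> n" "a \<noteq> b"
  shows "[C 1] @ flat a b \<simeq> flat a b @ [C 1]"
proof -
  let ?w = "carry_word 3 a b"
  have w: "valid ?w" using assms by (intro valid_carry_word) auto
  have perm: "strand_perm ?w 3 = a" "strand_perm ?w 4 = b"
      "strand_perm ?w 1 = 1" "strand_perm ?w 2 = 2"
    using strand_perm_carry_word[of 3 a b] assms by simp_all
  have "vconj ?w [C 1] \<simeq> flat 1 2" using vconj_C1[OF w] perm n_ge_4 by simp
  then have C1: "vconj ?w [C 1] \<simeq> [C 1]" by (simp only: flat_1_2)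
  have flat_ab: "vconj ?w (flat 3 4) \<simeq> flat a b" using vconj_flat[OF w, of 3 4] assms perm by simp
  show ?thesis by (rule commute_vconj[OF w C1_flat_3_4_comm C1 flat_ab])
qed

lemma flat_comm:
  assumes "1 \<le> i" "i + 1 \<le> n" "1 \<le> j" "j + 1 \<le> n" "i + 2 \<le> j \<or> j + 2 \<le> i"
  shows "flat i (i + 1) @ flat j (j + 1) \<simeq> flat j (j + 1) @ flat i (i + 1)"
proof -
  let ?w = "carry_word 1 i (i + 1)"
  let ?a = "strand_perm (rev ?w) j" and ?b = "strand_perm (rev ?w) (j + 1)"
  have w: "valid ?w" using assms by (intro valid_carry_word) auto
  have w12: "strand_perm ?w 1 = i" "strand_perm ?w 2 = i + 1"
    using strand_perm_carry_word[of 1 i "i + 1", unfolded one_add_one] assms by simp_all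
  have ab: "1 \<le> ?a" "?a \<le> n" "1 \<le> ?b" "?b \<le> n"
    using strand_perm_range[of "rev ?w" j] strand_perm_range[of "rev ?w" "j + 1"] w assms
    by simp_all
  have ab12: "?a \<noteq> 1" "?a \<noteq> 2" "?b \<noteq> 1" "?b \<noteq> 2"
    using w12 assms by (auto simp: strand_perm_rev_eq_iff)
  have a_ne_b: "?a \<noteq> ?b" using strand_perm_inj[of "rev ?w" j "j + 1"] by auto
  have C1: "vconj ?w [C 1] \<simeq> flat i (i + 1)" by (simp add: flat_eq_vconj)
  have flat_ab: "vconj ?w (flat ?a ?b) \<simeq> flat j (j + 1)"
    using vconj_flat[OF w ab(1,2) ab(3,4) a_ne_b] by simp
  show ?thesis
    using ab ab12 a_ne_b by (intro commute_vconj[OF w C1_flat_comm C1 flat_ab]) auto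
qed

lemma flat_braid_1_2_3: "flat 1 2 @ flat 2 3 @ flat 1 2 \<simeq> flat 2 3 @ flat 1 2 @ flat 2 3"
proof -
  have w: "valid [1]" "valid [1, 1]" "valid [1, 2]" using n_ge_4 by auto
  have perm: "strand_perm [1, 1] 1 = 1" "strand_perm [1, 1] 2 = 2"
      "strand_perm [1, 2] 1 = 2" "strand_perm [1, 2] 2 = 3"
    by (simp_all add: adj_swap_def)
  have "vconj [1, 1] [C 1] \<simeq> flat 1 2" using vconj_C1[OF w(2)] perm n_ge_4 by simp
  then have flat_1_2: "vconj [1] (vconj [1] [C 1]) \<simeq> flat 1 2" by (simp add: vconj_vconj)
  have "vconj [1, 2] [C 1] \<simeq> flat 2 3" using vconj_C1[OF w(3)] perm n_ge_4 by simp
  then have flat_2_3: "vconj [1] (vconj [2] [C 1]) \<simeq> flat 2 3" by (simp add: vconj_vconj)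
  have "vconj [1] [C 1] @ vconj [2] [C 1] @ vconj [1] [C 1]
      \<simeq> vconj [2] [C 1] @ vconj [1] [C 1] @ vconj [2] [C 1]"
    using C1_braid_rel by (simp add: vconj_def)
  then show ?thesis by (rule braid_vconj[OF w(1) _ flat_1_2 flat_2_3])
qed

lemma flat_braid:
  assumes "1 \<le> i" "i + 2 \<le> n"
  shows "flat i (i + 1) @ flat (i + 1) (i + 2) @ flat i (i + 1)
    \<simeq> flat (i + 1) (i + 2) @ flat i (i + 1) @ flat (i + 1) (i + 2)"
proof -
  let ?w = "countdown (i - 1) 1 @ countdown i 2 @ countdown (i + 1) 3"
  have w: "valid ?w" using assms by (auto simp: valid_def)
  have perm: "strand_perm ?w 1 = i" "strand_perm ?w 2 = i + 1" "strand_perm ?w 3 = i + 2"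
    using assms by (simp_all add: strand_perm_countdown)
  have "vconj ?w (flat 1 2) \<simeq> flat i (i + 1)" using vconj_flat[OF w, of 1 2] perm assms by simp
  moreover have "vconj ?w (flat 2 3) \<simeq> flat (i + 1) (i + 2)"
    using vconj_flat[OF w, of 2 3] perm assms by simp
  ultimately show ?thesis by (rule braid_vconj[OF w flat_braid_1_2_3])
qed

lemma bar_bar_flat:
  assumes "1 \<le> i" "i + 1 \<le> n"
  shows "bar i @ bar (i + 1) @ flat i (i + 1) @ bar (i + 1) @ bar i \<simeq> [V i] @ flat i (i + 1) @ [V i]"
proof -
  let ?w = "carry_word 1 i (i + 1)"
  have w: "valid ?w" using assms by (intro valid_carry_word) auto
  have perm: "strand_perm ?w 1 = i" "strand_perm ?w 2 = i + 1"
    using strand_perm_carry_word[of 1 i "i + 1", unfolded one_add_one] assms by simp_all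
  have bar2: "vconj ?w (bar 2) \<simeq> bar (i + 1)" using vconj_bar[OF w, of 2] perm assms by simp
  have B1: "vconj ?w [B 1] \<simeq> bar i" using vconj_B1[OF w] perm assms by simp
  have C1: "vconj ?w [C 1] \<simeq> flat i (i + 1)" by (simp add: flat_eq_vconj)
  have "bar (i + 1) @ bar i @ flat i (i + 1) @ bar i @ bar (i + 1)
      \<simeq> vconj ?w (bar 2) @ vconj ?w [B 1] @ vconj ?w [C 1] @ vconj ?w [B 1] @ vconj ?w (bar 2)"
    using weq_sym[OF bar2] weq_sym[OF B1] weq_sym[OF C1] by (intro weq_append)
  also have "\<dots> \<simeq> vconj ?w (bar 2) @ vconj ?w [B 1] @ vconj ?w ([C 1] @ [B 1] @ bar 2)"
    by (intro weq_append_left weq_sym[OF vconj_append3[OF w]])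
  also have "\<dots> \<simeq> vconj ?w (bar 2 @ [B 1] @ ([C 1] @ [B 1] @ bar 2))"
    using weq_sym[OF vconj_append3[OF w]] .
  also have "\<dots> \<simeq> vconj ?w (vconj [1] [C 1])"
    using bar_flat_bar_rel by (intro vconj_cong) (simp add: bar_2 vconj_def)
  also have "\<dots> \<simeq> flat (strand_perm (?w @ [1]) 1) (strand_perm (?w @ [1]) 2)"
    unfolding vconj_vconj using w assms by (intro vconj_C1) auto
  also have "\<dots> = flat (i + 1) i" using perm by (simp add: adj_swap_def numeral_2_eq_2)
  also have "\<dots> \<simeq> [V i] @ flat i (i + 1) @ [V i]"
    using V_conj_flat[of i "i + 1" i] assms by (simp add: adj_swap_def weq_sym)
  finally have swapped: "bar (i + 1) @ bar i @ flat i (i + 1) @ bar i @ bar (i + 1)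
      \<simeq> [V i] @ flat i (i + 1) @ [V i]" .
  have bb: "bar i @ bar (i + 1) \<simeq> bar (i + 1) @ bar i" using assms by (intro bar_comm) auto
  have "bar i @ bar (i + 1) @ flat i (i + 1) @ bar (i + 1) @ bar i
      = (bar i @ bar (i + 1)) @ flat i (i + 1) @ (bar (i + 1) @ bar i)" by simp
  also have "\<dots> \<simeq> (bar (i + 1) @ bar i) @ flat i (i + 1) @ (bar i @ bar (i + 1))"
    by (rule weq_append[OF bb weq_append[OF weq_refl weq_sym[OF bb]]])
  also have "\<dots> \<simeq> [V i] @ flat i (i + 1) @ [V i]" using swapped by simp
  finally show ?thesis .
qed

end

fun psi_word :: "gen \<Rightarrow> gen list" where
  "psi_word (V i) = [V i]"
| "psi_word (C k) = flat k (k + 1)"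
| "psi_word (B k) = bar k"

fun gen_index :: "gen \<Rightarrow> nat" where
  "gen_index (V i) = i"
| "gen_index (C k) = k"
| "gen_index (B k) = k"

text \<open>\<open>psi_gen\<close> leaves the junk generators \<open>C 0\<close> and \<open>B 0\<close> fixed, whence the index condition.\<close>

lemma psi_gen_eq_pw: "1 \<le> gen_index g \<Longrightarrow> psi_gen g = pw (psi_word g)"
proof (cases g)
  case (C k)
  assume "1 \<le> gen_index g"
  then show ?thesis using C
    by (cases "k = 1") (auto simp: flat_def carry_def vconj_def lift_past_def
        vdown_def vup_def countdown_def vword_def)
next
  case (B k)
  assume "1 \<le> gen_index g"
  then show ?thesis using B
    by (cases "k = 1") (auto simp: bar_def carry_def vconj_def vdown_def vup_def
        countdown_def vword_def)
qed simp

lemma subst_word_psi_gen_pw: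
  "\<forall>g \<in> set xs. 1 \<le> gen_index g \<Longrightarrow> subst_word psi_gen (pw xs) = pw (concat (map psi_word xs))"
  by (induction xs) (auto simp: pw_Cons subst_word_Cons psi_gen_eq_pw)

lemma pres_eq_subst_psi_genI:
  "\<forall>g \<in> set xs \<union> set ys. 1 \<le> gen_index g \<Longrightarrow>
    weq R (concat (map psi_word xs)) (concat (map psi_word ys)) \<Longrightarrow>
    pres_eq R (subst_word psi_gen (pw xs)) (subst_word psi_gen (pw ys))"
  by (simp add: subst_word_psi_gen_pw weq_def)

lemma pres_eq_subst_psi_gen_NilI:
  "\<forall>g \<in> set xs. 1 \<le> gen_index g \<Longrightarrow> weq R (concat (map psi_word xs)) [] \<Longrightarrow>
    pres_eq R (subst_word psi_gen (pw xs)) (subst_word psi_gen [])"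
  using pres_eq_subst_psi_genI[of xs "[]" R] by simp

lemma subst_word_phi_gen [simp]: "subst_word phi_gen w = w"
  by (induction w) (auto simp: subst_word_Cons phi_gen_def pw_def inv_letter_def)

context reduced_rels
begin

lemma respects_rels_red_rels_phi_gen: "respects_rels (red_rels n) R phi_gen"
  unfolding respects_rels_def red_rels_def subst_word_phi_gen
  apply (intro ballI)
  apply (elim UnE CollectE exE conjE insertE emptyE)
  apply (simp_all only: prod.inject prod.case weq_def[symmetric] pw_Nil[symmetric])
  subgoal for x i by (rule V_braid) auto
  subgoal for x i j using V_far_comm[of i j] V_far_comm[of j i] by (auto intro: weq_sym)
  subgoal for x i by (rule V_square) auto
  subgoal for x j by (rule C1_V_comm) auto
  subgoal by (rule C1_square)
  subgoal by (rule B1_square)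
  subgoal for x j by (rule B1_V_comm) auto
  subgoal by (rule C1_braid_rel)
  subgoal by (rule C1_flat_comm_rel)
  subgoal by (rule B1_bar_comm_rel)
  subgoal by (rule C1_bar_comm_rel)
  subgoal by (rule bar_flat_bar_rel)
  done

lemma respects_rels_FT_rels_psi_gen: "respects_rels (FT_rels n) R psi_gen"
  unfolding respects_rels_def FT_rels_def
  apply (intro ballI)
  apply (elim UnE CollectE exE conjE)
  apply (simp_all only: prod.inject prod.case)
  subgoal for x i by (rule pres_eq_subst_psi_gen_NilI) (use V_square[of i] in auto)
  subgoal for x i j
    by (rule pres_eq_subst_psi_genI) (use V_far_comm[of i j] V_far_comm[of j i] in \<open>auto intro: weq_sym\<close>)
  subgoal for x i by (rule pres_eq_subst_psi_genI) (use V_braid[of i] in auto)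
  subgoal for x i by (rule pres_eq_subst_psi_gen_NilI) (use bar_square[of i] in auto)
  subgoal for x i j by (rule pres_eq_subst_psi_genI) (use bar_comm[of i j] in auto)
  subgoal for x i by (rule pres_eq_subst_psi_genI) (use bar_V_comm[of i i] in \<open>auto simp: adj_swap_def\<close>)
  subgoal for x i j by (rule pres_eq_subst_psi_genI) (use bar_V_comm[of i j] in \<open>auto simp: adj_swap_def\<close>)
  subgoal for x i by (rule pres_eq_subst_psi_gen_NilI) (use flat_square[of i] in auto)
  subgoal for x i by (rule pres_eq_subst_psi_genI) (use flat_braid[of i] in auto)
  subgoal for x i j by (rule pres_eq_subst_psi_genI) (use flat_comm[of i j] in auto)
  subgoal for x i j
    by (rule pres_eq_subst_psi_genI) (use flat_V_comm[of i "i + 1" j] in \<open>auto simp: adj_swap_def\<close>)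
  subgoal for x i by (rule pres_eq_subst_psi_genI) (use V_flat_V[of i] in auto)
  subgoal for x i by (rule pres_eq_subst_psi_genI) (use bar_bar_flat[of i] in auto)
  subgoal for x i j by (rule pres_eq_subst_psi_genI) (use bar_flat_comm[of i j] in auto)
  done

end

lemma reduced_rels_red_rels: "4 \<le> n \<Longrightarrow> reduced_rels (red_rels n) n"
  by unfold_locales (assumption | (intro weq_relI; force simp: red_rels_def))+

section \<open>The flat twisted braid group satisfies the reduced relations\<close>

lemma virtual_rels_FT_rels: "virtual_rels (FT_rels n) n"
  by unfold_locales (intro weq_relI; force simp: FT_rels_def)+

context
  fixes n :: nat
  assumes n_ge_4: "4 \<le> n"
begin

interpretation FT: virtual_rels "FT_rels n" n
  by (rule virtual_rels_FT_rels)

notation FT.weq_R (infix "\<approx>" 50)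

lemma FT_rel: "(pw a, pw b) \<in> FT_rels n \<Longrightarrow> a \<approx> b"
  by (rule weq_relI)


lemma FT_bar: "1 \<le> k \<Longrightarrow> k \<le> n \<Longrightarrow> bar k \<approx> [B k]"
proof (induction k rule: nat_induct_at_least)
  case base
  show ?case using bar_1 by (simp add: One_nat_def)
next
  case (Suc k)
  have "bar (Suc k) = [V k] @ bar k @ [V k]"
    using Suc.hyps carry_Suc[of 1 k "[B 1]"] by (simp add: bar_def)
  also have "\<dots> \<approx> [V k] @ [B k] @ [V k]" using Suc by (intro weq_append_context) auto
  also have "\<dots> \<approx> [V k] @ [V k] @ [B (Suc k)]"
    using Suc by (intro weq_append_left FT_rel) (auto simp: FT_rels_def)
  also have "\<dots> = [V k, V k] @ [B (Suc k)]" by simp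
  also have "\<dots> \<approx> [] @ [B (Suc k)]" using Suc by (intro weq_append_right FT.V_square) auto
  finally show ?case by simp
qed

lemma FT_flat: "1 \<le> k \<Longrightarrow> k \<le> n - 1 \<Longrightarrow> flat k (k + 1) \<approx> [C k]"
proof (induction k rule: nat_induct_at_least)
  case base
  show ?case using flat_1_2 by (simp add: One_nat_def numeral_2_eq_2)
next
  case (Suc k)
  have perm: "strand_perm [k, k + 1] k = k + 1" "strand_perm [k, k + 1] (k + 1) = k + 2"
    by (simp_all add: adj_swap_def)
  have "vconj [k, k + 1] (flat k (k + 1)) \<approx> flat (k + 1) (k + 2)"
    using FT.vconj_flat[of "[k, k + 1]" k "k + 1"] Suc unfolding perm by simp
  then have "flat (Suc k) (Suc k + 1) \<approx> vconj [k, k + 1] (flat k (k + 1))"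
    by (simp add: weq_sym)
  also have "\<dots> \<approx> vconj [k, k + 1] [C k]" using Suc by (intro FT.vconj_cong) auto
  also have "\<dots> = [V k] @ [V (k + 1), C k, V (k + 1)] @ [V k]" by (simp add: vconj_def)
  also have "\<dots> \<approx> [V k] @ [V k, C (k + 1), V k] @ [V k]"
    using Suc by (intro weq_append_context weq_sym[OF FT_rel]) (auto simp: FT_rels_def)
  also have "\<dots> = [V k, V k] @ [C (k + 1)] @ [V k, V k]" by simp
  also have "\<dots> \<approx> [] @ [C (k + 1)] @ []"
    using Suc FT.V_square[of k] by (intro weq_append weq_refl) auto
  finally show ?case by simp
qed

lemma FT_C1_braid_rel:
  "[V 1, C 1, V 1, V 2, C 1, V 2, V 1, C 1, V 1] \<approx> [V 2, C 1, V 2, V 1, C 1, V 1, V 2, C 1, V 2]"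
proof -
  have w: "FT.valid [1]" using n_ge_4 by simp
  have braid: "[C 1] @ [C 2] @ [C 1] \<approx> [C 2] @ [C 1] @ [C 2]"
    using n_ge_4 by (intro FT_rel) (force simp: FT_rels_def)
  have C1: "vconj [1] [C 1] \<approx> [V 1, C 1, V 1]" by (simp add: vconj_def)
  have C2: "vconj [1] [C 2] \<approx> [V 2, C 1, V 2]"
    using n_ge_4 unfolding vconj_def by (intro FT_rel) (force simp: FT_rels_def)
  show ?thesis using FT.braid_vconj[OF w braid C1 C2] by simp
qed

lemma FT_C1_flat_comm_rel:
  "[C 1, V 2, V 3, V 1, V 2, C 1, V 2, V 1, V 3, V 2] \<approx> [V 2, V 3, V 1, V 2, C 1, V 2, V 1, V 3, V 2, C 1]"
proof -
  let ?w = "[2, 3, 1, 2] :: nat list"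
  have perm: "strand_perm ?w 1 = 3" "strand_perm ?w 2 = 4" by (simp_all add: adj_swap_def)
  have w: "FT.valid ?w" using n_ge_4 by auto
  have "vconj ?w [C 1] \<approx> flat 3 4" using FT.vconj_C1[OF w] n_ge_4 unfolding perm by simp
  also have "flat 3 4 \<approx> [C 3]" using FT_flat[of 3] n_ge_4 by simp
  finally have C3: "[C 3] \<approx> vconj ?w [C 1]" by (rule weq_sym)
  have "[C 1] @ [C 3] \<approx> [C 3] @ [C 1]" using n_ge_4 by (intro FT_rel) (force simp: FT_rels_def)
  then have "[C 1] @ vconj ?w [C 1] \<approx> vconj ?w [C 1] @ [C 1]"
    using C3 by (rule weq_commute_cong[OF _ weq_refl])
  then show ?thesis by (simp add: vconj_def)
qed

lemma FT_B1_bar_comm_rel: "[B 1, V 1, B 1, V 1] \<approx> [V 1, B 1, V 1, B 1]"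
proof -
  have "[B 1] @ [B 2] \<approx> [B 2] @ [B 1]" using n_ge_4 by (intro FT_rel) (force simp: FT_rels_def)
  then have "[B 1] @ bar 2 \<approx> bar 2 @ [B 1]"
    by (rule weq_commute_cong[OF _ weq_refl weq_sym[OF FT_bar]]) (use n_ge_4 in auto)
  then show ?thesis by (simp add: bar_2)
qed

lemma FT_C1_bar_comm_rel: "[C 1, V 2, V 1, B 1, V 1, V 2] \<approx> [V 2, V 1, B 1, V 1, V 2, C 1]"
proof -
  have "[C 1] @ [B 3] \<approx> [B 3] @ [C 1]"
    using n_ge_4 by (intro weq_sym[OF FT_rel]) (force simp: FT_rels_def)
  then have "[C 1] @ bar 3 \<approx> bar 3 @ [C 1]"
    by (rule weq_commute_cong[OF _ weq_refl weq_sym[OF FT_bar]]) (use n_ge_4 in auto)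
  then show ?thesis by (simp add: bar_3)
qed

lemma FT_bar_flat_bar_rel: "[V 1, B 1, V 1, B 1, C 1, B 1, V 1, B 1, V 1] \<approx> [V 1, C 1, V 1]"
proof -
  have bar2: "bar 2 \<approx> [B 2]" using FT_bar[of 2] n_ge_4 by simp
  have bb: "[B 2] @ [B 1] \<approx> [B 1] @ [B 2]" using n_ge_4 by (intro FT_rel) (force simp: FT_rels_def)
  have "bar 2 @ [B 1] @ [C 1] @ [B 1] @ bar 2 \<approx> [B 2] @ [B 1] @ [C 1] @ [B 1] @ [B 2]"
    by (intro weq_append bar2 weq_refl)
  also have "\<dots> = ([B 2] @ [B 1]) @ [C 1] @ ([B 1] @ [B 2])" by simp
  also have "\<dots> \<approx> ([B 1] @ [B 2]) @ [C 1] @ ([B 2] @ [B 1])"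
    by (rule weq_append[OF bb weq_append[OF weq_refl weq_sym[OF bb]]])
  also have "\<dots> \<approx> [V 1, C 1, V 1]" using n_ge_4 by (intro FT_rel) (force simp: FT_rels_def)
  finally show ?thesis by (simp add: bar_2)
qed

lemma reduced_rels_FT_rels: "reduced_rels (FT_rels n) n"
proof (intro reduced_rels.intro virtual_rels_FT_rels reduced_rels_axioms.intro)
  show "[C 1, C 1] \<approx> []" "[B 1, B 1] \<approx> []"
    using n_ge_4 by (intro FT_rel; force simp: FT_rels_def)+
qed (fact n_ge_4 FT_C1_braid_rel FT_C1_flat_comm_rel FT_B1_bar_comm_rel FT_C1_bar_comm_rel
    FT_bar_flat_bar_rel)+

end

lemma FT_gens_gen_index: "g \<in> FT_gens n \<Longrightarrow> 1 \<le> gen_index g"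
  by (auto simp: FT_gens_def)

lemma psi_gen_FT_gens:
  assumes "4 \<le> n" "g \<in> FT_gens n"
  shows "pres_eq (FT_rels n) (psi_gen g) [(g, True)]"
proof -
  have "weq (FT_rels n) (psi_word g) [g]"
    using assms FT_bar[of n] FT_flat[of n] by (cases g) (auto simp: FT_gens_def)
  then show ?thesis
    by (simp add: psi_gen_eq_pw[OF FT_gens_gen_index[OF assms(2)]] weq_def pw_def)
qed

lemma fst_set_psi_gen:
  assumes "g \<in> FT_gens n"
  shows "fst ` set (psi_gen g) \<subseteq> red_gens n"
proof -
  have "set (psi_word g) \<subseteq> red_gens n"
    using assms by (cases g) (auto simp: FT_gens_def red_gens_def flat_eq_vconj bar_eq_vconj
        set_vconj carry_word_def lift_past_def)
  then show ?thesis by (simp add: psi_gen_eq_pw[OF FT_gens_gen_index[OF assms]])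
qed

lemma fst_set_phi_gen: "2 \<le> n \<Longrightarrow> g \<in> red_gens n \<Longrightarrow> fst ` set (phi_gen g) \<subseteq> FT_gens n"
  by (auto simp: red_gens_def FT_gens_def phi_gen_def)

lemma subst_word_psi_gen_phi_gen: "g \<in> red_gens n \<Longrightarrow> subst_word psi_gen (phi_gen g) = [(g, True)]"
  by (auto simp: red_gens_def phi_gen_def pw_def subst_word_Cons)

theorem theorem11:
  fixes n :: nat
  assumes "n \<ge> 4"
  shows "induced_map (FT_rels n) phi_gen \<in> iso (Gred n) (FT n)
    \<and> induced_map (red_rels n) psi_gen \<in> hom (FT n) (Gred n)
    \<and> (\<forall>x \<in> carrier (FT n). induced_map (FT_rels n) phi_gen (induced_map (red_rels n) psi_gen x) = x)
    \<and> (\<forall>x \<in> carrier (Gred n). induced_map (red_rels n) psi_gen (induced_map (FT_rels n) phi_gen x) = x)"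
proof -
  have "group_isomorphisms (Gred n) (FT n)
      (induced_map (FT_rels n) phi_gen) (induced_map (red_rels n) psi_gen)"
    unfolding Gred_def FT_def
  proof (rule group_isomorphisms_induced_map)
    show "respects_rels (red_rels n) (FT_rels n) phi_gen"
      using reduced_rels_FT_rels[OF assms] by (rule reduced_rels.respects_rels_red_rels_phi_gen)
    show "respects_rels (FT_rels n) (red_rels n) psi_gen"
      using reduced_rels_red_rels[OF assms] by (rule reduced_rels.respects_rels_FT_rels_psi_gen)
  qed (use assms fst_set_phi_gen fst_set_psi_gen psi_gen_FT_gens
      subst_word_psi_gen_phi_gen pres_eq.refl in auto)
  then show ?thesis
    by (simp add: group_isomorphisms_imp_iso) (simp add: group_isomorphisms_def)
qed

end
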